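(* Let $M$ be an ergodic aperiodic marker process. Then for every $m\ge1$ there is a marker process $M'$ which is a finitary dilution of $M$ and has minimal gap length at least $m$.
   Context: A marker process is a non-trivial $\{0,1\}$-valued $\mathbb{Z}$-process. Aperiodic: a.s.\ there is no $p\ge1$ with $M_{n+p}=M_n$ for all $n$. A finitary dilution of $M$ is a marker process $M'$ which is a finitary factor of $M$ (shift-equivariant, with $M'_0$ a.s.\ determined by $M$ on a random finite window) such that $M'_n\le M_n$ for all $n$. The occurrences of $M$ partition $\mathbb{Z}$ into intervals, each starting at a $1$ of $M$ and ending just before the next; $I^M_0$ denotes the interval containing $0$. The minimal gap length of $M$ is the largest $m\ge1$ with $|I^M_0|\ge m$ almost surely. *)

theory Defs
  imports "HOL-Probability.Probability"
begin

text \<open>A {0,1}-valued Z-process is represented by its law: a probability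
  measure on the sequence space int => bool (True = 1) with the product
  sigma-algebra. The process M is the coordinate process.\<close>

definition seqM :: "(int \<Rightarrow> bool) measure" where
  "seqM = PiM UNIV (\<lambda>_. count_space UNIV)"

definition shift :: "(int \<Rightarrow> bool) \<Rightarrow> (int \<Rightarrow> bool)" where
  "shift x = (\<lambda>n. x (n + 1))"

definition stationary :: "(int \<Rightarrow> bool) measure \<Rightarrow> bool" where
  "stationary \<nu> \<longleftrightarrow> distr \<nu> seqM shift = \<nu>"

definition marker_process :: "(int \<Rightarrow> bool) measure \<Rightarrow> bool" where
  "marker_process \<nu> \<longleftrightarrow> prob_space \<nu> \<and> sets \<nu> = sets seqM \<and> stationary \<nu>
     \<and> \<not> (AE x in \<nu>. \<forall>n. \<not> x n)"

definition ergodic :: "(int \<Rightarrow> bool) measure \<Rightarrow> bool" where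
  "ergodic \<nu> \<longleftrightarrow> stationary \<nu> \<and>
     (\<forall>A \<in> sets seqM. shift -` A = A \<longrightarrow> measure \<nu> A = 0 \<or> measure \<nu> A = 1)"

definition aperiodic :: "(int \<Rightarrow> bool) measure \<Rightarrow> bool" where
  "aperiodic \<nu> \<longleftrightarrow> (AE x in \<nu>. \<not> (\<exists>p::int. p \<ge> 1 \<and> (\<forall>n. x (n + p) = x n)))"

definition finitary_dilution ::
  "(int \<Rightarrow> bool) measure \<Rightarrow> ((int \<Rightarrow> bool) \<Rightarrow> (int \<Rightarrow> bool)) \<Rightarrow> bool" where
  "finitary_dilution \<mu> \<phi> \<longleftrightarrow>
     \<phi> \<in> seqM \<rightarrow>\<^sub>M seqM \<and>
     (AE x in \<mu>. \<phi> (shift x) = shift (\<phi> x)) \<and>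
     (\<exists>X0 \<in> sets seqM. measure \<mu> X0 = 1 \<and>
        (\<forall>x \<in> X0. \<exists>N::nat. \<forall>y \<in> X0.
            (\<forall>k::int. \<bar>k\<bar> \<le> int N \<longrightarrow> y k = x k) \<longrightarrow> \<phi> y 0 = \<phi> x 0)) \<and>
     (AE x in \<mu>. \<forall>n. \<phi> x n \<longrightarrow> x n) \<and>
     marker_process (distr \<mu> seqM \<phi>)"

text \<open>The interval I_0 of the partition induced by the ones of x that contains 0
  (empty if there is no 1 at or before 0 or no 1 after 0).\<close>
definition interval0 :: "(int \<Rightarrow> bool) \<Rightarrow> int set" where
  "interval0 x = {n. \<exists>a b. a \<le> 0 \<and> 0 < b \<and> x a \<and> x b \<and> (\<forall>k. a < k \<and> k < b \<longrightarrow> \<not> x k)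
                       \<and> a \<le> n \<and> n < b}"

definition min_gap_length :: "(int \<Rightarrow> bool) measure \<Rightarrow> nat" where
  "min_gap_length \<nu> = (GREATEST m. m \<ge> 1 \<and> (AE x in \<nu>. m \<le> card (interval0 x)))"

end

theory Submission imports Defs begin

text \<open>Aperiodicity yields a window length L such that, with positive probability, M_0 = 1 and
  M has no period p < m on [-L, L]; as there are finitely many words on that window, one word w
  with w_0 = 1 and no period below m occurs around 0 with positive probability. Put M'_n = 1 iff w
  occurs in M around n. This is a finitary factor below M, and two occurrences at distance p < m
  would overlap and make p a period of w, so distinct ones of M' are at least m apart.
  Ergodicity gives M' a one almost surely, stationarity then puts ones on both sides of 0, and so
  the interval of M' containing 0 has length at least m.\<close>

lemma space_seqM [simp]: "space seqM = UNIV"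
  by (simp add: seqM_def space_PiM)

lemma measurable_coordinate [measurable]: "(\<lambda>x. x n) \<in> seqM \<rightarrow>\<^sub>M count_space UNIV"
  unfolding seqM_def by (rule measurable_component_singleton) simp

lemma measurable_seqM_coordinatewise:
  "(\<And>n. (\<lambda>x. f x n) \<in> M \<rightarrow>\<^sub>M count_space UNIV) \<Longrightarrow> f \<in> M \<rightarrow>\<^sub>M seqM"
  unfolding seqM_def by (auto intro!: measurable_PiM_single' simp: space_PiM)

lemma sets_Collect_seqM: "Measurable.pred seqM P \<Longrightarrow> {x. P x} \<in> sets seqM"
  by (drule predE) simp

lemma measurable_shift [measurable]: "shift \<in> seqM \<rightarrow>\<^sub>M seqM"
  unfolding shift_def by (rule measurable_seqM_coordinatewise) measurable

lemma stationary_distr: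
  assumes "stationary \<mu>" "sets \<mu> = sets seqM" "\<phi> \<in> seqM \<rightarrow>\<^sub>M seqM"
    and "\<And>x. \<phi> (shift x) = shift (\<phi> x)"
  shows "stationary (distr \<mu> seqM \<phi>)"
proof -
  have \<phi>: "\<phi> \<in> \<mu> \<rightarrow>\<^sub>M seqM" and sh: "shift \<in> \<mu> \<rightarrow>\<^sub>M seqM"
    using assms(3) measurable_shift by (simp_all add: measurable_cong_sets[OF assms(2) refl])
  have "distr (distr \<mu> seqM \<phi>) seqM shift = distr \<mu> seqM (shift \<circ> \<phi>)"
    using \<phi> by (simp add: distr_distr)
  also have "shift \<circ> \<phi> = \<phi> \<circ> shift"
    using assms(4) by auto
  also have "distr \<mu> seqM (\<phi> \<circ> shift) = distr (distr \<mu> seqM shift) seqM \<phi>"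
    using sh assms(3) by (simp add: distr_distr)
  also have "distr \<mu> seqM shift = \<mu>"
    using assms(1) by (simp add: stationary_def)
  finally show ?thesis
    unfolding stationary_def .
qed

lemma ergodic_distr:
  assumes "ergodic \<mu>" "sets \<mu> = sets seqM" "\<phi> \<in> seqM \<rightarrow>\<^sub>M seqM"
    and "\<And>x. \<phi> (shift x) = shift (\<phi> x)"
  shows "ergodic (distr \<mu> seqM \<phi>)"
  unfolding ergodic_def
proof (intro conjI ballI impI)
  show "stationary (distr \<mu> seqM \<phi>)"
    using assms by (intro stationary_distr) (auto simp: ergodic_def)
  fix A assume A: "A \<in> sets seqM" "shift -` A = A"
  have \<phi>A: "\<phi> -` A \<in> sets seqM"
    using measurable_sets[OF assms(3) A(1)] by simp
  have "shift -` (\<phi> -` A) = \<phi> -` A"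
    using A(2) by (auto simp: assms(4) set_eq_iff)
  then have "measure \<mu> (\<phi> -` A) = 0 \<or> measure \<mu> (\<phi> -` A) = 1"
    using assms(1) \<phi>A by (simp add: ergodic_def)
  moreover have "measure (distr \<mu> seqM \<phi>) A = measure \<mu> (\<phi> -` A)"
    using A(1) assms(3) sets_eq_imp_space_eq[OF assms(2)]
    by (simp add: measure_distr measurable_cong_sets[OF assms(2) refl])
  ultimately show "measure (distr \<mu> seqM \<phi>) A = 0 \<or> measure (distr \<mu> seqM \<phi>) A = 1"
    by simp
qed

lemma AE_distr_seqM_iff:
  assumes "sets \<mu> = sets seqM" "\<phi> \<in> seqM \<rightarrow>\<^sub>M seqM" "Measurable.pred seqM P"
  shows "(AE y in distr \<mu> seqM \<phi>. P y) \<longleftrightarrow> (AE x in \<mu>. P (\<phi> x))"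
proof (rule AE_distr_iff)
  show "\<phi> \<in> \<mu> \<rightarrow>\<^sub>M seqM"
    using assms(2) by (simp add: measurable_cong_sets[OF assms(1) refl])
  show "{x \<in> space seqM. P x} \<in> sets seqM"
    using assms(3) by (rule predE)
qed

lemma (in finite_measure) AE_mem_of_subset_measure_eq:
  assumes "A \<subseteq> B" "A \<in> sets M" "B \<in> sets M" "measure M A = measure M B"
  shows "AE x in M. x \<in> B \<longrightarrow> x \<in> A"
proof -
  have "B - A \<in> null_sets M"
    using assms finite_measure_Diff[of B A] by (simp add: null_sets_def emeasure_eq_measure)
  then show ?thesis
    by (rule AE_mp[OF AE_not_in]) auto
qed

locale stationary_process = prob_space \<nu> for \<nu> :: "(int \<Rightarrow> bool) measure" +
  assumes sets_eq [measurable_cong, simp]: "sets \<nu> = sets seqM"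
    and stationary: "stationary \<nu>"

lemma stationary_process_if_marker_process: "marker_process \<nu> \<Longrightarrow> stationary_process \<nu>"
  by (simp add: marker_process_def stationary_process_def stationary_process_axioms_def)

context stationary_process
begin

lemma space_eq [simp]: "space \<nu> = UNIV"
  using sets_eq_imp_space_eq[OF sets_eq] by simp

lemma prob_shift_vimage:
  assumes "A \<in> sets seqM"
  shows "prob (shift -` A) = prob A"
proof -
  have "prob A = measure (distr \<nu> seqM shift) A"
    using stationary by (simp add: stationary_def)
  also have "\<dots> = prob (shift -` A)"
    using assms by (simp add: measure_distr measurable_cong_sets[OF sets_eq refl])
  finally show ?thesis ..
qed

lemma prob_translation_invariant:
  fixes A :: "int \<Rightarrow> (int \<Rightarrow> bool) set"
  assumes "\<And>n. A n \<in> sets seqM" and "\<And>n. shift -` A n = A (n + 1)"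
  shows "prob (A n) = prob (A 0)"
proof (induction n rule: int_induct[where k = 0])
  case (step1 i)
  then show ?case
    using prob_shift_vimage[OF assms(1)] assms(2) by metis
next
  case (step2 i)
  then show ?case
    using prob_shift_vimage[OF assms(1), of "i - 1"] assms(2)[of "i - 1"] by simp
qed simp

lemma AE_no_ones_if_not_at_0:
  assumes "AE x in \<nu>. \<not> x 0"
  shows "AE x in \<nu>. \<forall>n. \<not> x n"
proof -
  have [measurable]: "{x. x n} \<in> sets seqM" for n
    by (intro sets_Collect_seqM) measurable
  then have "prob {x. x n} = prob {x. x 0}" for n
    by (rule prob_translation_invariant) (auto simp: shift_def)
  then have "AE x in \<nu>. \<not> x n" for n
    using assms prob_eq_0[of "{x. x 0}"] prob_eq_0[of "{x. x n}"] by simp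
  then show ?thesis
    by (simp add: AE_all_countable)
qed

text \<open>Poincare recurrence: the nested events "a one at or before n" all have the same probability,
  so a one at or before some n is almost surely a one at or before 0; likewise for the future.\<close>
lemma AE_ones_on_both_sides:
  "AE y in \<nu>. (\<exists>n. y n) \<longrightarrow> (\<exists>a\<le>0. y a) \<and> (\<exists>b>0. y b)"
proof -
  define past where "past n = {y. \<exists>a\<le>n. y (a::int)}" for n
  define future where "future n = {y. \<exists>b>n. y (b::int)}" for n
  have sets_past: "past n \<in> sets seqM" and sets_future: "future n \<in> sets seqM" for n
    unfolding past_def future_def by (intro sets_Collect_seqM, measurable)+
  have "(\<exists>a\<le>n. y (a + 1)) \<longleftrightarrow> (\<exists>a\<le>n + 1. y a)"
    and "(\<exists>b>n. y (b + 1)) \<longleftrightarrow> (\<exists>b>n + 1. y b)" for n :: int and y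
    by (metis add_le_cancel_right diff_add_cancel, metis add_less_cancel_right diff_add_cancel)
  then have past_shift: "shift -` past n = past (n + 1)"
    and future_shift: "shift -` future n = future (n + 1)" for n
    unfolding past_def future_def shift_def by auto
  have "AE y in \<nu>. y \<in> past (int k) \<longrightarrow> y \<in> past 0" for k :: nat
  proof (rule AE_mem_of_subset_measure_eq)
    show "past 0 \<subseteq> past (int k)"
      unfolding past_def by (auto, metis of_nat_0_le_iff order_trans)
    show "prob (past 0) = prob (past (int k))"
      using prob_translation_invariant[where A = past, OF sets_past past_shift, of "int k"] by simp
  qed (simp_all add: sets_past)
  moreover have "AE y in \<nu>. y \<in> future (- int k) \<longrightarrow> y \<in> future 0" for k :: nat
  proof (rule AE_mem_of_subset_measure_eq)
    show "future 0 \<subseteq> future (- int k)"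
      unfolding future_def by (auto, metis neg_le_0_iff_le of_nat_0_le_iff order.strict_trans1)
    show "prob (future 0) = prob (future (- int k))"
      using prob_translation_invariant[where A = future, OF sets_future future_shift, of "- int k"] by simp
  qed (simp_all add: sets_future)
  ultimately have "AE y in \<nu>. \<forall>k::nat. (y \<in> past (int k) \<longrightarrow> y \<in> past 0)
      \<and> (y \<in> future (- int k) \<longrightarrow> y \<in> future 0)"
    by (subst AE_all_countable) (auto intro: AE_conjI)
  then show ?thesis
  proof (rule AE_mp, intro AE_I2 impI)
    fix y assume y: "\<forall>k::nat. (y \<in> past (int k) \<longrightarrow> y \<in> past 0)
      \<and> (y \<in> future (- int k) \<longrightarrow> y \<in> future 0)"
    assume "\<exists>n. y n"
    then obtain n where "y n" ..
    then have "y \<in> past (int (nat n))" "y \<in> future (- int (nat (1 - n)))"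
      unfolding past_def future_def by (auto intro!: exI[of _ n])
    with y have "y \<in> past 0" "y \<in> future 0"
      by blast+
    then show "(\<exists>a\<le>0. y a) \<and> (\<exists>b>0. y b)"
      unfolding past_def future_def by blast
  qed
qed

lemma AE_exists_one_if_ergodic:
  assumes "ergodic \<nu>" and "\<not> (AE x in \<nu>. \<forall>n. \<not> x n)"
  shows "AE x in \<nu>. \<exists>n. x n"
proof -
  let ?A = "{x. \<exists>n. x n}"
  have A: "?A \<in> sets seqM"
    by (intro sets_Collect_seqM) measurable
  have "shift -` ?A = ?A"
    by (auto simp: shift_def) (metis diff_add_cancel)
  then have "prob ?A = 0 \<or> prob ?A = 1"
    using assms(1) A by (simp add: ergodic_def)
  moreover have "prob ?A \<noteq> 0"
    using assms(2) A prob_eq_0[of ?A] by simp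
  ultimately show ?thesis
    using A prob_eq_1[of ?A] by simp
qed

end

lemma interval0_eq_atLeastLessThan:
  assumes "a \<le> 0" "0 < b" "y a" "y b" "\<And>k. a < k \<Longrightarrow> k < b \<Longrightarrow> \<not> y k"
  shows "interval0 y = {a..<b}"
proof (intro set_eqI iffI)
  fix n assume "n \<in> interval0 y"
  then obtain a' b' where a': "a' \<le> 0" "y a'" and b': "0 < b'" "y b'"
    and between: "\<forall>k. a' < k \<and> k < b' \<longrightarrow> \<not> y k" and n: "a' \<le> n" "n < b'"
    unfolding interval0_def by blast
  have "\<not> a' < a" "\<not> b < b'"
    using between assms(1-4) a' b' by auto
  moreover have "\<not> a < a'" "\<not> b' < b"
    using assms(5)[of a'] assms(5)[of b'] assms(1,2) a' b' by auto
  ultimately show "n \<in> {a..<b}"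
    using n by simp
next
  fix n assume "n \<in> {a..<b}"
  with assms show "n \<in> interval0 y"
    unfolding interval0_def by auto
qed

lemma interval0_between_nearest_ones:
  assumes "\<exists>a\<le>0. y a" and "\<exists>b>0. y b"
  obtains a b where "a \<le> 0" "0 < b" "y a" "y b" "interval0 y = {a..<b}"
proof -
  obtain a0 b0 where a0: "a0 \<le> 0" "y a0" and b0: "0 < b0" "y b0"
    using assms by blast
  define A where "A = {k. a0 \<le> k \<and> k \<le> 0 \<and> y k}"
  define B where "B = {k. 0 < k \<and> k \<le> b0 \<and> y k}"
  have "finite A"
    unfolding A_def by (rule finite_subset[of _ "{a0..0}"]) auto
  moreover have "finite B"
    unfolding B_def by (rule finite_subset[of _ "{0..b0}"]) auto
  moreover have "a0 \<in> A" "b0 \<in> B"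
    using a0 b0 by (simp_all add: A_def B_def)
  ultimately have "Max A \<in> A" "Min B \<in> B"
    by (auto intro: Max_in Min_in)
  then have "Max A \<le> 0" "y (Max A)" "0 < Min B" "y (Min B)"
    by (simp_all add: A_def B_def)
  moreover have "\<not> y k" if "Max A < k" "k < Min B" for k
  proof
    assume "y k"
    show False
    proof (cases "k \<le> 0")
      case True
      with \<open>y k\<close> \<open>Max A \<in> A\<close> that(1) have "k \<in> A"
        by (auto simp: A_def)
      with \<open>finite A\<close> that(1) show False
        by (meson Max_ge leD)
    next
      case False
      with \<open>y k\<close> \<open>Min B \<in> B\<close> that(2) have "k \<in> B"
        by (auto simp: B_def)
      with \<open>finite B\<close> that(2) show False
        by (meson Min_le leD)
    qed
  qed
  ultimately show ?thesis
    using that interval0_eq_atLeastLessThan by blast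
qed

definition ones_separated :: "nat \<Rightarrow> (int \<Rightarrow> bool) \<Rightarrow> bool" where
  "ones_separated m y \<longleftrightarrow> (\<forall>a b. y a \<longrightarrow> y b \<longrightarrow> a < b \<longrightarrow> int m \<le> b - a)"

lemma measurable_ones_separated [measurable]: "Measurable.pred seqM (ones_separated m)"
  unfolding ones_separated_def by measurable

lemma card_interval0_ge:
  assumes "ones_separated m y" and "\<exists>a\<le>0. y a" and "\<exists>b>0. y b"
  shows "m \<le> card (interval0 y)"
proof -
  obtain a b where "a \<le> 0" "0 < b" "y a" "y b" and interval: "interval0 y = {a..<b}"
    using interval0_between_nearest_ones[OF assms(2,3)] .
  with assms(1) have "int m \<le> b - a"
    unfolding ones_separated_def by simp
  with interval show ?thesis
    by simp
qed

lemma min_gap_length_ge: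
  assumes "prob_space \<nu>" and "1 \<le> m" and "AE y in \<nu>. m \<le> card (interval0 y)"
  shows "m \<le> min_gap_length \<nu>"
proof -
  let ?P = "\<lambda>k. 1 \<le> k \<and> (AE y in \<nu>. k \<le> card (interval0 y))"
  have "\<exists>b. \<forall>k. ?P k \<longrightarrow> k \<le> b"
  proof (rule ccontr)
    assume unbounded: "\<nexists>b. \<forall>k. ?P k \<longrightarrow> k \<le> b"
    have "AE y in \<nu>. b \<le> card (interval0 y)" for b
    proof -
      from unbounded obtain k where "?P k" "b \<le> k"
        by (meson nat_le_linear)
      then have "AE y in \<nu>. k \<le> card (interval0 y)"
        by blast
      then show ?thesis
        by eventually_elim (use \<open>b \<le> k\<close> in linarith)
    qed
    then have "AE y in \<nu>. \<forall>b. b \<le> card (interval0 y)"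
      by (simp add: AE_all_countable)
    then have "AE y in \<nu>. False"
      by eventually_elim (metis Suc_n_not_le_n)
    with assms(1) show False
      by (simp add: prob_space.AE_False)
  qed
  then obtain b where "\<forall>k. ?P k \<longrightarrow> k \<le> b"
    by blast
  with assms(2,3) show ?thesis
    unfolding min_gap_length_def by (intro Greatest_le_nat[where P = ?P]) auto
qed

definition locally_periodic :: "nat \<Rightarrow> int \<Rightarrow> (int \<Rightarrow> bool) \<Rightarrow> bool" where
  "locally_periodic L p x \<longleftrightarrow> (\<forall>i. \<bar>i\<bar> \<le> int L \<longrightarrow> \<bar>i + p\<bar> \<le> int L \<longrightarrow> x (i + p) = x i)"

definition has_short_local_period :: "nat \<Rightarrow> nat \<Rightarrow> (int \<Rightarrow> bool) \<Rightarrow> bool" where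
  "has_short_local_period m L x \<longleftrightarrow> (\<exists>p. 1 \<le> p \<and> p < int m \<and> locally_periodic L p x)"

lemma locally_periodic_mono: "L' \<le> L \<Longrightarrow> locally_periodic L p x \<Longrightarrow> locally_periodic L' p x"
  unfolding locally_periodic_def by force

lemma measurable_has_short_local_period [measurable]:
  "Measurable.pred seqM (has_short_local_period m L)"
  unfolding has_short_local_period_def locally_periodic_def by measurable

lemma periodic_if_short_local_periods:
  assumes "\<And>L. has_short_local_period m L x"
  shows "\<exists>p\<ge>1. \<forall>n. x (n + p) = x n"
proof -
  have "\<exists>p. 1 \<le> p \<and> p < int m \<and> (\<forall>L. locally_periodic L p x)"
  proof (rule ccontr)
    assume "\<not> ?thesis"
    then have "\<forall>p\<in>{1..<int m}. \<exists>L. \<not> locally_periodic L p x"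
      by auto
    then obtain f where f: "\<And>p. p \<in> {1..<int m} \<Longrightarrow> \<not> locally_periodic (f p) p x"
      by metis
    define L where "L = (\<Sum>p\<in>{1..<int m}. f p)"
    have "\<not> locally_periodic L p x" if "p \<in> {1..<int m}" for p
      using f[OF that] locally_periodic_mono member_le_sum[OF that, of f] by (auto simp: L_def)
    with assms[of L] show False
      unfolding has_short_local_period_def by auto
  qed
  then obtain p where "1 \<le> p" and p: "\<And>L. locally_periodic L p x"
    by blast
  have "x (n + p) = x n" for n
    using p[of "nat (\<bar>n\<bar> + \<bar>p\<bar>)"] unfolding locally_periodic_def by (auto elim!: allE[of _ n])
  with \<open>1 \<le> p\<close> show ?thesis
    by blast
qed

lemma exists_window_without_short_local_period:
  assumes "marker_process \<mu>" and "aperiodic \<mu>"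
  obtains L where "measure \<mu> {x. x 0 \<and> \<not> has_short_local_period m L x} \<noteq> 0"
proof -
  interpret stationary_process \<mu>
    using assms(1) by (rule stationary_process_if_marker_process)
  have sets: "{x. x 0 \<and> \<not> has_short_local_period m L x} \<in> sets seqM" for L
    by (intro sets_Collect_seqM) measurable
  have "\<exists>L. prob {x. x 0 \<and> \<not> has_short_local_period m L x} \<noteq> 0"
  proof (rule ccontr)
    assume "\<nexists>L. prob {x. x 0 \<and> \<not> has_short_local_period m L x} \<noteq> 0"
    then have "AE x in \<mu>. x 0 \<longrightarrow> has_short_local_period m L x" for L
      using prob_eq_0 sets by auto
    then have "AE x in \<mu>. \<forall>L. x 0 \<longrightarrow> has_short_local_period m L x"
      by (subst AE_all_countable) blast
    with assms(2) have "AE x in \<mu>. \<not> x 0"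
      unfolding aperiodic_def by eventually_elim (use periodic_if_short_local_periods in blast)
    then have "AE x in \<mu>. \<forall>n. \<not> x n"
      by (rule AE_no_ones_if_not_at_0)
    with assms(1) show False
      by (simp add: marker_process_def)
  qed
  with that show ?thesis
    by blast
qed

definition cylinder :: "nat \<Rightarrow> (int \<Rightarrow> bool) \<Rightarrow> (int \<Rightarrow> bool) set" where
  "cylinder L w = {x. \<forall>k. \<bar>k\<bar> \<le> int L \<longrightarrow> x k = w k}"

lemma sets_cylinder: "cylinder L w \<in> sets seqM"
  unfolding cylinder_def by (intro sets_Collect_seqM) measurable

lemma finite_cylinders: "finite (cylinder L ` B)"
proof (rule finite_subset)
  show "cylinder L ` B \<subseteq> (\<lambda>S. cylinder L (\<lambda>k. k \<in> S)) ` Pow {- int L..int L}"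
  proof
    fix C assume "C \<in> cylinder L ` B"
    then obtain w where "C = cylinder L w"
      by blast
    also have "\<dots> = cylinder L (\<lambda>k. k \<in> {k \<in> {- int L..int L}. w k})"
      unfolding cylinder_def by auto
    finally show "C \<in> (\<lambda>S. cylinder L (\<lambda>k. k \<in> S)) ` Pow {- int L..int L}"
      by blast
  qed
qed simp

lemma exists_cylinder_measure_ne_0:
  fixes M :: "(int \<Rightarrow> bool) measure"
  assumes "finite_measure M" "sets M = sets seqM" and "B \<in> sets M" and "measure M B \<noteq> 0"
  obtains w where "w \<in> B" and "measure M (cylinder L w) \<noteq> 0"
proof -
  interpret finite_measure M
    by fact
  have "\<exists>w\<in>B. measure M (cylinder L w) \<noteq> 0"
  proof (rule ccontr)
    assume null: "\<not> (\<exists>w\<in>B. measure M (cylinder L w) \<noteq> 0)"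
    have cyl: "cylinder L ` B \<subseteq> sets M"
      using assms(2) sets_cylinder by auto
    have "B \<subseteq> (\<Union>C\<in>cylinder L ` B. C)"
      by (auto simp: cylinder_def)
    then have "measure M B \<le> measure M (\<Union>C\<in>cylinder L ` B. C)"
      using cyl finite_cylinders by (intro finite_measure_mono) auto
    also have "\<dots> \<le> (\<Sum>C\<in>cylinder L ` B. measure M C)"
      using cyl finite_cylinders by (intro finite_measure_subadditive_finite) auto
    also have "\<dots> = 0"
      using null by (intro sum.neutral) auto
    finally show False
      using assms(4) measure_nonneg[of M B] by linarith
  qed
  with that show ?thesis
    by blast
qed

definition occurrences :: "nat \<Rightarrow> (int \<Rightarrow> bool) \<Rightarrow> (int \<Rightarrow> bool) \<Rightarrow> int \<Rightarrow> bool" where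
  "occurrences L w x n \<longleftrightarrow> (\<forall>k. \<bar>k\<bar> \<le> int L \<longrightarrow> x (n + k) = w k)"

lemma measurable_occurrences [measurable]: "occurrences L w \<in> seqM \<rightarrow>\<^sub>M seqM"
  by (rule measurable_seqM_coordinatewise) (unfold occurrences_def, measurable)

lemma occurrences_shift: "occurrences L w (shift x) = shift (occurrences L w x)"
  unfolding occurrences_def shift_def by (simp add: ac_simps)

lemma occurrences_0_iff: "occurrences L w x 0 \<longleftrightarrow> x \<in> cylinder L w"
  unfolding occurrences_def cylinder_def by simp

lemma occurrences_le: "w 0 \<Longrightarrow> occurrences L w x n \<Longrightarrow> x n"
  unfolding occurrences_def by (drule spec[of _ 0]) simp

lemma ones_separated_occurrences:
  assumes "\<not> has_short_local_period m L w"
  shows "ones_separated m (occurrences L w x)"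
  unfolding ones_separated_def
proof (intro allI impI)
  fix a b assume a: "occurrences L w x a" and b: "occurrences L w x b" and "a < b"
  show "int m \<le> b - a"
  proof (rule ccontr)
    assume "\<not> int m \<le> b - a"
    with \<open>a < b\<close> assms have "\<not> locally_periodic L (b - a) w"
      unfolding has_short_local_period_def by auto
    then obtain i where i: "\<bar>i\<bar> \<le> int L" "\<bar>i + (b - a)\<bar> \<le> int L"
      and "w (i + (b - a)) \<noteq> w i"
      unfolding locally_periodic_def by auto
    moreover have "x (b + i) = w i" "x (a + (i + (b - a))) = w (i + (b - a))"
      using a b i unfolding occurrences_def by blast+
    ultimately show False
      by (simp add: algebra_simps)
  qed
qed

lemma finitary_dilution_occurrences:
  assumes "marker_process \<mu>" and "w 0" and "measure \<mu> (cylinder L w) \<noteq> 0"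
  shows "finitary_dilution \<mu> (occurrences L w)"
proof -
  interpret stationary_process \<mu>
    using assms(1) by (rule stationary_process_if_marker_process)
  have occ: "occurrences L w \<in> \<mu> \<rightarrow>\<^sub>M seqM"
    by measurable
  have "\<not> (AE y in distr \<mu> seqM (occurrences L w). \<forall>n. \<not> y n)"
  proof
    assume "AE y in distr \<mu> seqM (occurrences L w). \<forall>n. \<not> y n"
    then have "AE x in \<mu>. \<forall>n. \<not> occurrences L w x n"
      by (subst (asm) AE_distr_seqM_iff[OF sets_eq measurable_occurrences]) measurable
    then have "AE x in \<mu>. x \<notin> cylinder L w"
      by eventually_elim (metis occurrences_0_iff)
    with assms(3) show False
      using prob_eq_0 sets_cylinder by simp
  qed
  then have "marker_process (distr \<mu> seqM (occurrences L w))"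
    unfolding marker_process_def
  proof (intro conjI)
    show "prob_space (distr \<mu> seqM (occurrences L w))"
      using occ by (rule prob_space_distr)
    show "stationary (distr \<mu> seqM (occurrences L w))"
      using stationary sets_eq measurable_occurrences occurrences_shift by (rule stationary_distr)
  qed simp_all
  show ?thesis
    unfolding finitary_dilution_def
  proof (intro conjI bexI[of _ UNIV])
    show "AE x in \<mu>. occurrences L w (shift x) = shift (occurrences L w x)"
      by (simp add: occurrences_shift)
    show "measure \<mu> UNIV = 1"
      using prob_space by simp
    show "\<forall>x\<in>UNIV. \<exists>N. \<forall>y\<in>UNIV. (\<forall>k. \<bar>k\<bar> \<le> int N \<longrightarrow> y k = x k)
        \<longrightarrow> occurrences L w y 0 = occurrences L w x 0"
      by (intro ballI exI[of _ L]) (simp add: occurrences_def)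
    show "AE x in \<mu>. \<forall>n. occurrences L w x n \<longrightarrow> x n"
      using assms(2) by (intro AE_I2 allI impI) (rule occurrences_le)
  qed (use \<open>marker_process (distr \<mu> seqM (occurrences L w))\<close> sets.top[of seqM] in simp_all)
qed

theorem lemma3p11:
  fixes \<mu> :: "(int \<Rightarrow> bool) measure" and m :: nat
  assumes "marker_process \<mu>" and "ergodic \<mu>" and "aperiodic \<mu>" and "m \<ge> 1"
  shows "\<exists>\<phi>. finitary_dilution \<mu> \<phi> \<and> m \<le> min_gap_length (distr \<mu> seqM \<phi>)"
proof -
  interpret stationary_process \<mu>
    using assms(1) by (rule stationary_process_if_marker_process)
  let ?B = "\<lambda>L. {x. x 0 \<and> \<not> has_short_local_period m L x}"
  obtain L where "prob (?B L) \<noteq> 0"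
    using exists_window_without_short_local_period[OF assms(1,3)] .
  moreover have "?B L \<in> sets \<mu>"
    by (simp, intro sets_Collect_seqM) measurable
  ultimately obtain w where w: "w 0" "\<not> has_short_local_period m L w" and "prob (cylinder L w) \<noteq> 0"
    using exists_cylinder_measure_ne_0[OF finite_measure_axioms sets_eq] by blast
  then have dilution: "finitary_dilution \<mu> (occurrences L w)"
    using assms(1) by (intro finitary_dilution_occurrences)
  define \<nu> where "\<nu> = distr \<mu> seqM (occurrences L w)"
  have marker: "marker_process \<nu>"
    using dilution by (simp add: finitary_dilution_def \<nu>_def)
  then interpret \<nu>: stationary_process \<nu>
    by (rule stationary_process_if_marker_process)
  have "ergodic \<nu>"
    unfolding \<nu>_def using assms(2) by (intro ergodic_distr) (simp_all add: occurrences_shift)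
  with marker have "AE y in \<nu>. \<exists>n. y n"
    by (intro \<nu>.AE_exists_one_if_ergodic) (simp_all add: marker_process_def)
  moreover have "AE y in \<nu>. ones_separated m y"
    unfolding \<nu>_def using w(2)
    by (simp add: AE_distr_seqM_iff[OF sets_eq measurable_occurrences measurable_ones_separated]
        ones_separated_occurrences)
  ultimately have "AE y in \<nu>. m \<le> card (interval0 y)"
    using \<nu>.AE_ones_on_both_sides by eventually_elim (blast intro: card_interval0_ge)
  then have "m \<le> min_gap_length \<nu>"
    using \<nu>.prob_space_axioms assms(4) by (intro min_gap_length_ge)
  with dilution show ?thesis
    unfolding \<nu>_def by blast
qed

end
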